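(* Let $\rho$ be a symmetric Lévy measure on $\mathbb{R}^d\setminus\{0\}$ with full support and let $\Theta(u)=\int(1-\cos\langle u,r\rangle)\,\rho(dr)$, $u\in\mathbb{R}^d$. For all $d$-dimensional random vectors $U,V$ the following hold (with values in $[0,\infty]$): (a) If $(U',V')$ is an independent copy of $(U,V)$, then $\mathbb{E}\Theta(U-U')+\mathbb{E}\Theta(V-V')\le 2\mathbb{E}\Theta(U-V')$. (b) $\mathbb{E}\Theta(U-V)\le 2(\mathbb{E}\Theta(U)+\mathbb{E}\Theta(V))$, and if $U'$ is an independent copy of $U$, then $\mathbb{E}\Theta(U-U')\le 4\mathbb{E}\Theta(U)$. (c) $d_\rho^2(\mathcal L(U),\mathcal L(V))\le 4(\mathbb{E}\Theta(U)+\mathbb{E}\Theta(V))$. (d) If $(U',V')$ is an independent copy of $(U,V)$ and $\mathbb{E}\Theta(U)+\mathbb{E}\Theta(V)<\infty$, then all terms in the following identity are finite and $$d_\rho^2(\mathcal L(U),\mathcal L(V))=2\mathbb{E}\Theta(U-V')-\mathbb{E}\Theta(U-U')-\mathbb{E}\Theta(V-V').$$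
   Context: A symmetric Lévy measure on $\mathbb{R}^d\setminus\{0\}$ is a measure with $\rho(B)=\rho(-B)$ and $\int(1\wedge|r|^2)\rho(dr)<\infty$; full support means $\rho(G)>0$ for all nonempty open $G\subset\mathbb{R}^d\setminus\{0\}$. For $d$-dimensional random vectors $U,V$ with characteristic functions $f_U,f_V$, $d_\rho(\mathcal L(U),\mathcal L(V)):=\big(\int|f_U(r)-f_V(r)|^2\,\rho(dr)\big)^{1/2}\in[0,\infty]$. *)

theory Defs
  imports "HOL-Probability.Probability"
begin

text \<open>Symmetric Levy measure on R^d minus the origin, represented as a Borel measure
  on the euclidean space giving no mass to the origin.\<close>
definition sym_levy_measure :: "'a::euclidean_space measure \<Rightarrow> bool" where
  "sym_levy_measure \<rho> \<longleftrightarrow>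
     sets \<rho> = sets borel \<and>
     emeasure \<rho> {0} = 0 \<and>
     (\<forall>B \<in> sets borel. emeasure \<rho> (uminus ` B) = emeasure \<rho> B) \<and>
     (\<integral>\<^sup>+ r. ennreal (min 1 (norm r ^ 2)) \<partial>\<rho>) < \<infinity>"

definition full_support :: "'a::euclidean_space measure \<Rightarrow> bool" where
  "full_support \<rho> \<longleftrightarrow> (\<forall>G. open G \<and> G \<noteq> {} \<and> 0 \<notin> G \<longrightarrow> emeasure \<rho> G > 0)"

definition Theta :: "'a::euclidean_space measure \<Rightarrow> 'a \<Rightarrow> ennreal" where
  "Theta \<rho> u = (\<integral>\<^sup>+ r. ennreal (1 - cos (u \<bullet> r)) \<partial>\<rho>)"

definition charf :: "'a::euclidean_space measure \<Rightarrow> 'a \<Rightarrow> complex" where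
  "charf \<mu> r = (\<integral> x. cis (r \<bullet> x) \<partial>\<mu>)"

definition d_rho :: "'a::euclidean_space measure \<Rightarrow> 'a measure \<Rightarrow> 'a measure \<Rightarrow> ennreal" where
  "d_rho \<rho> \<mu> \<nu> =
     (let I = (\<integral>\<^sup>+ r. ennreal ((cmod (charf \<mu> r - charf \<nu> r))\<^sup>2) \<partial>\<rho>)
      in if I = \<infinity> then \<infinity> else ennreal (sqrt (enn2real I)))"

abbreviation law :: "'b measure \<Rightarrow> ('b \<Rightarrow> 'a::euclidean_space) \<Rightarrow> 'a measure" where
  "law M X \<equiv> distr M borel X"

end

theory Submission
  imports Defs
begin

text \<open>By Tonelli, \<open>E \<Theta>(X) = \<integral> (1 - Re \<phi>\<^sub>X) d\<rho>\<close>, and for independent \<open>X\<close>, \<open>Y\<close> the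
  characteristic function of \<open>X - Y\<close> is \<open>\<phi>\<^sub>X \<cdot> cnj \<phi>\<^sub>Y\<close>. All four statements thus
  reduce to pointwise facts about complex numbers \<open>a\<close>, \<open>b\<close> in the closed unit disc,
  integrated against \<open>\<rho>\<close>: the identity
  \<open>|a - b|\<^sup>2 + (1 - |a|\<^sup>2) + (1 - |b|\<^sup>2) = 2 (1 - Re (a \<cdot> cnj b))\<close> gives (d) and hence (a),
  the bound \<open>|a - b|\<^sup>2 \<le> 4 ((1 - Re a) + (1 - Re b))\<close> gives (c), and the same two facts
  for \<open>a = cis x\<close>, \<open>b = cis y\<close> give \<open>1 - cos (x - y) \<le> 2 ((1 - cos x) + (1 - cos y))\<close>,
  whence (b).\<close>

lemma cmod_diff_power2_eq:
  fixes a b :: complex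
  shows "(cmod (a - b))\<^sup>2 + (1 - Re (a * cnj a)) + (1 - Re (b * cnj b)) = 2 * (1 - Re (a * cnj b))"
proof -
  have "(cmod (a - b))\<^sup>2 = (Re a - Re b)\<^sup>2 + (Im a - Im b)\<^sup>2"
    by (simp add: cmod_power2)
  then show ?thesis
    by (simp add: power2_eq_square algebra_simps)
qed

lemma cmod_diff_power2_le:
  fixes a b :: complex
  assumes "cmod a \<le> 1" "cmod b \<le> 1"
  shows "(cmod (a - b))\<^sup>2 \<le> 4 * ((1 - Re a) + (1 - Re b))"
proof -
  have "(Re a)\<^sup>2 + (Im a)\<^sup>2 \<le> 1" "(Re b)\<^sup>2 + (Im b)\<^sup>2 \<le> 1"
    using assms by (simp_all add: cmod_power2[symmetric] power_le_one)
  moreover have "0 \<le> (Re a + Re b - 2)\<^sup>2 + (Im a + Im b)\<^sup>2"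
    by simp
  ultimately show ?thesis
    unfolding cmod_power2 by (simp add: power2_eq_square algebra_simps)
qed

lemma one_minus_cos_diff_le:
  fixes x y :: real
  shows "1 - cos (x - y) \<le> 2 * ((1 - cos x) + (1 - cos y))"
proof -
  have "2 * (1 - cos (x - y)) = (cmod (cis x - cis y))\<^sup>2"
    using cmod_diff_power2_eq[of "cis x" "cis y"] by (simp add: cis_cnj cis_mult)
  also have "\<dots> \<le> 4 * ((1 - cos x) + (1 - cos y))"
    using cmod_diff_power2_le[of "cis x" "cis y"] by simp
  finally show ?thesis
    by simp
qed

lemma ennreal_numeral_mult_add:
  "0 \<le> x \<Longrightarrow> 0 \<le> y \<Longrightarrow> ennreal (numeral n * (x + y)) = numeral n * (ennreal x + ennreal y)"
  by (simp add: ennreal_mult)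

lemma enn2real_eq_of_add_eq_twice:
  fixes x y z w :: ennreal
  assumes "x + y + z = 2 * w" "w < \<infinity>"
  shows "x < \<infinity>" "y < \<infinity>" "z < \<infinity>" "enn2real x = 2 * enn2real w - enn2real y - enn2real z"
proof -
  have sum_finite: "x + y + z < \<infinity>"
    using assms by (simp add: ennreal_mult_less_top)
  then show "x < \<infinity>" "y < \<infinity>" "z < \<infinity>"
    by auto
  have "enn2real (x + y + z) = enn2real x + enn2real y + enn2real z"
    using sum_finite by (simp add: enn2real_plus)
  then show "enn2real x = 2 * enn2real w - enn2real y - enn2real z"
    using assms(1) by (simp add: enn2real_mult)
qed

lemma sets_sym_levy_measure: "sym_levy_measure \<rho> \<Longrightarrow> sets \<rho> = sets borel"
  unfolding sym_levy_measure_def by auto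

lemma emeasure_norm_ge_less_top:
  fixes \<rho> :: "'a::euclidean_space measure"
  assumes "sym_levy_measure \<rho>" "0 < e"
  shows "emeasure \<rho> {r. e \<le> norm r} < \<infinity>"
proof -
  let ?c = "min 1 (e\<^sup>2)" and ?S = "{r::'a. e \<le> norm r}"
  have "?S \<in> sets \<rho>"
    using sets_sym_levy_measure[OF assms(1)] by simp
  then have "ennreal ?c * emeasure \<rho> ?S = (\<integral>\<^sup>+ r. ennreal ?c * indicator ?S r \<partial>\<rho>)"
    by (simp add: nn_integral_cmult_indicator)
  also have "\<dots> \<le> (\<integral>\<^sup>+ r. ennreal (min 1 (norm r ^ 2)) \<partial>\<rho>)"
    using assms(2) by (intro nn_integral_mono) (auto simp: indicator_def intro!: ennreal_leI min.mono min.coboundedI2 power_mono)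
  also have "\<dots> < \<infinity>"
    using assms(1) unfolding sym_levy_measure_def by simp
  finally show ?thesis
    using assms(2) by (auto simp: ennreal_mult_less_top min_def split: if_splits)
qed

lemma sigma_finite_sym_levy_measure:
  fixes \<rho> :: "'a::euclidean_space measure"
  assumes "sym_levy_measure \<rho>"
  shows "sigma_finite_measure \<rho>"
proof
  let ?S = "\<lambda>n. {r::'a. 1 / real (Suc n) \<le> norm r}"
  have "\<Union> (insert {0} (range ?S)) = UNIV"
  proof -
    have "r \<in> \<Union> (range ?S)" if "r \<noteq> 0" for r :: 'a
    proof -
      obtain n where "1 / real (Suc n) < norm r"
        using \<open>r \<noteq> 0\<close> nat_approx_posE zero_less_norm_iff by blast
      then show ?thesis
        by (auto intro: less_imp_le)
    qed
    then show ?thesis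
      by auto
  qed
  moreover have "emeasure \<rho> {0} = 0"
    using assms unfolding sym_levy_measure_def by simp
  moreover have "emeasure \<rho> (?S n) \<noteq> \<infinity>" for n
    using emeasure_norm_ge_less_top[OF assms, of "1 / real (Suc n)"] by simp
  ultimately show "\<exists>A. countable A \<and> A \<subseteq> sets \<rho> \<and> \<Union> A = space \<rho> \<and> (\<forall>a\<in>A. emeasure \<rho> a \<noteq> \<infinity>)"
    using sets_sym_levy_measure[OF assms] sets_eq_imp_space_eq[OF sets_sym_levy_measure[OF assms]]
    by (intro exI[of _ "insert {0} (range ?S)"]) auto
qed

lemma borel_measurable_Theta:
  fixes \<rho> :: "'a::euclidean_space measure"
  assumes "sym_levy_measure \<rho>"
  shows "Theta \<rho> \<in> borel_measurable borel"
proof -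
  interpret sigma_finite_measure \<rho>
    using assms by (rule sigma_finite_sym_levy_measure)
  have "(\<lambda>(u, r). ennreal (1 - cos (u \<bullet> r))) \<in> borel_measurable (borel \<Otimes>\<^sub>M \<rho>)"
    using sets_sym_levy_measure[OF assms]
    by (subst measurable_cong_sets[OF sets_pair_measure_cong[OF refl] refl]) measurable
  then show ?thesis
    unfolding Theta_def[abs_def] by (rule borel_measurable_nn_integral)
qed

lemma Theta_diff_le:
  fixes u v :: "'a::euclidean_space"
  assumes "sets \<rho> = sets borel"
  shows "Theta \<rho> (u - v) \<le> 2 * (Theta \<rho> u + Theta \<rho> v)"
proof -
  have meas: "(\<lambda>r. ennreal (1 - cos (w \<bullet> r))) \<in> borel_measurable \<rho>" for w :: 'a
    by (subst measurable_cong_sets[OF assms refl]) measurable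
  have "Theta \<rho> (u - v) \<le> (\<integral>\<^sup>+ r. 2 * (ennreal (1 - cos (u \<bullet> r)) + ennreal (1 - cos (v \<bullet> r))) \<partial>\<rho>)"
    unfolding Theta_def
  proof (rule nn_integral_mono)
    fix r
    have "ennreal (1 - cos ((u - v) \<bullet> r)) \<le> ennreal (2 * ((1 - cos (u \<bullet> r)) + (1 - cos (v \<bullet> r))))"
      using one_minus_cos_diff_le by (intro ennreal_leI) (simp add: inner_diff_left)
    also have "\<dots> = 2 * (ennreal (1 - cos (u \<bullet> r)) + ennreal (1 - cos (v \<bullet> r)))"
      by (rule ennreal_numeral_mult_add) simp_all
    finally show "ennreal (1 - cos ((u - v) \<bullet> r)) \<le> 2 * (ennreal (1 - cos (u \<bullet> r)) + ennreal (1 - cos (v \<bullet> r)))" .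
  qed
  also have "\<dots> = 2 * (Theta \<rho> u + Theta \<rho> v)"
    unfolding Theta_def using meas by (simp add: nn_integral_cmult nn_integral_add)
  finally show ?thesis .
qed

lemma borel_measurable_cis [measurable]: "cis \<in> borel_measurable borel"
  by (intro borel_measurable_continuous_onI continuous_intros)

lemma norm_charf_le_1:
  assumes "prob_space \<mu>"
  shows "cmod (charf \<mu> r) \<le> 1"
proof -
  have "cmod (charf \<mu> r) \<le> (\<integral>x. cmod (cis (r \<bullet> x)) \<partial>\<mu>)"
    unfolding charf_def by (rule integral_norm_bound)
  also have "\<dots> = 1"
    using assms by (simp add: prob_space.prob_space)
  finally show ?thesis .
qed

lemma one_minus_Re_charf_mult_cnj_nonneg:
  assumes "prob_space \<mu>" "prob_space \<nu>"
  shows "0 \<le> 1 - Re (charf \<mu> r * cnj (charf \<nu> r))"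
proof -
  have "cmod (charf \<mu> r * cnj (charf \<nu> r)) \<le> 1"
    using assms by (simp add: norm_mult mult_le_one norm_charf_le_1)
  then show ?thesis
    using complex_Re_le_cmod[of "charf \<mu> r * cnj (charf \<nu> r)"] by linarith
qed

lemma charf_distr:
  fixes X :: "'b \<Rightarrow> 'a::euclidean_space"
  assumes "X \<in> borel_measurable M"
  shows "charf (distr M borel X) r = (\<integral>\<omega>. cis (r \<bullet> X \<omega>) \<partial>M)"
  unfolding charf_def using assms by (subst integral_distr) auto

lemma borel_measurable_charf:
  fixes \<mu> :: "'a::euclidean_space measure"
  assumes "prob_space \<mu>" "sets \<mu> = sets borel"
  shows "charf \<mu> \<in> borel_measurable borel"
proof -
  interpret prob_space \<mu> by fact
  have "(\<lambda>(r, x). cis (r \<bullet> x)) \<in> borel_measurable (borel \<Otimes>\<^sub>M \<mu>)"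
    by (subst measurable_cong_sets[OF sets_pair_measure_cong[OF refl assms(2)] refl]) measurable
  then show ?thesis
    unfolding charf_def[abs_def] by (rule borel_measurable_lebesgue_integral)
qed

lemma nn_integral_one_minus_cos_eq_charf:
  fixes \<mu> :: "'a::euclidean_space measure"
  assumes "prob_space \<mu>" "sets \<mu> = sets borel"
  shows "(\<integral>\<^sup>+ x. ennreal (1 - cos (x \<bullet> r)) \<partial>\<mu>) = ennreal (1 - Re (charf \<mu> r))"
proof -
  interpret prob_space \<mu> by fact
  have cis_int: "integrable \<mu> (\<lambda>x. cis (r \<bullet> x))"
    by (rule integrable_const_bound[where B=1])
      (auto simp: measurable_cong_sets[OF assms(2) refl])
  then have cos_int: "integrable \<mu> (\<lambda>x. cos (r \<bullet> x))"
    by (auto dest: integrable_Re)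
  have "(\<integral>\<^sup>+ x. ennreal (1 - cos (x \<bullet> r)) \<partial>\<mu>) = ennreal (\<integral>x. 1 - cos (r \<bullet> x) \<partial>\<mu>)"
    using cos_int by (subst nn_integral_eq_integral[symmetric]) (auto simp: inner_commute)
  also have "(\<integral>x. 1 - cos (r \<bullet> x) \<partial>\<mu>) = 1 - Re (charf \<mu> r)"
    using cis_int cos_int by (simp add: prob_space charf_def integral_Re[symmetric])
  finally show ?thesis .
qed

lemma nn_integral_Theta_eq_charf:
  fixes \<mu> \<rho> :: "'a::euclidean_space measure"
  assumes "prob_space \<mu>" "sets \<mu> = sets borel" "sym_levy_measure \<rho>"
  shows "(\<integral>\<^sup>+ u. Theta \<rho> u \<partial>\<mu>) = (\<integral>\<^sup>+ r. ennreal (1 - Re (charf \<mu> r)) \<partial>\<rho>)"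
proof -
  interpret \<mu>: prob_space \<mu> by fact
  interpret \<rho>: sigma_finite_measure \<rho>
    using assms(3) by (rule sigma_finite_sym_levy_measure)
  interpret pair_sigma_finite \<mu> \<rho> ..
  have "(\<lambda>(u, r). ennreal (1 - cos (u \<bullet> r))) \<in> borel_measurable (\<mu> \<Otimes>\<^sub>M \<rho>)"
    using assms(2) sets_sym_levy_measure[OF assms(3)]
    by (subst measurable_cong_sets[OF sets_pair_measure_cong refl]) measurable
  then have "(\<integral>\<^sup>+ u. Theta \<rho> u \<partial>\<mu>) = (\<integral>\<^sup>+ r. (\<integral>\<^sup>+ u. ennreal (1 - cos (u \<bullet> r)) \<partial>\<mu>) \<partial>\<rho>)"
    unfolding Theta_def by (rule Fubini'[symmetric])
  also have "\<dots> = (\<integral>\<^sup>+ r. ennreal (1 - Re (charf \<mu> r)) \<partial>\<rho>)"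
    using nn_integral_one_minus_cos_eq_charf[OF assms(1,2)] by simp
  finally show ?thesis .
qed

lemma d_rho_power2: "(d_rho \<rho> \<mu> \<nu>)\<^sup>2 = (\<integral>\<^sup>+ r. ennreal ((cmod (charf \<mu> r - charf \<nu> r))\<^sup>2) \<partial>\<rho>)"
proof (cases "(\<integral>\<^sup>+ r. ennreal ((cmod (charf \<mu> r - charf \<nu> r))\<^sup>2) \<partial>\<rho>) = \<infinity>")
  case False
  let ?I = "\<integral>\<^sup>+ r. ennreal ((cmod (charf \<mu> r - charf \<nu> r))\<^sup>2) \<partial>\<rho>"
  have "(ennreal (sqrt (enn2real ?I)))\<^sup>2 = ennreal (enn2real ?I)"
    by (simp add: ennreal_power)
  also have "\<dots> = ?I"
    using False by (simp add: less_top)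
  finally show ?thesis
    using False unfolding d_rho_def Let_def by simp
qed (simp add: d_rho_def power2_eq_square)

lemma d_rho_power2_add_eq:
  fixes \<mu> \<nu> \<rho> :: "'a::euclidean_space measure"
  assumes "prob_space \<mu>" "sets \<mu> = sets borel" "prob_space \<nu>" "sets \<nu> = sets borel"
    and "sets \<rho> = sets borel"
  shows "(d_rho \<rho> \<mu> \<nu>)\<^sup>2 + (\<integral>\<^sup>+ r. ennreal (1 - Re (charf \<mu> r * cnj (charf \<mu> r))) \<partial>\<rho>)
      + (\<integral>\<^sup>+ r. ennreal (1 - Re (charf \<nu> r * cnj (charf \<nu> r))) \<partial>\<rho>)
    = 2 * (\<integral>\<^sup>+ r. ennreal (1 - Re (charf \<mu> r * cnj (charf \<nu> r))) \<partial>\<rho>)"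
proof -
  have [measurable]: "charf \<mu> \<in> borel_measurable \<rho>" "charf \<nu> \<in> borel_measurable \<rho>"
    using assms by (simp_all add: measurable_cong_sets[OF assms(5) refl] borel_measurable_charf)
  have "ennreal ((cmod (charf \<mu> r - charf \<nu> r))\<^sup>2) + ennreal (1 - Re (charf \<mu> r * cnj (charf \<mu> r)))
      + ennreal (1 - Re (charf \<nu> r * cnj (charf \<nu> r)))
    = 2 * ennreal (1 - Re (charf \<mu> r * cnj (charf \<nu> r)))" for r
  proof -
    note one_minus_Re_charf_mult_cnj_nonneg[OF assms(1,1), of r]
      one_minus_Re_charf_mult_cnj_nonneg[OF assms(3,3), of r]
    then have "ennreal ((cmod (charf \<mu> r - charf \<nu> r))\<^sup>2) + ennreal (1 - Re (charf \<mu> r * cnj (charf \<mu> r)))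
        + ennreal (1 - Re (charf \<nu> r * cnj (charf \<nu> r)))
      = ennreal ((cmod (charf \<mu> r - charf \<nu> r))\<^sup>2 + (1 - Re (charf \<mu> r * cnj (charf \<mu> r)))
        + (1 - Re (charf \<nu> r * cnj (charf \<nu> r))))"
      by (simp del: ennreal_plus add: ennreal_plus[symmetric])
    also have "\<dots> = ennreal (2 * (1 - Re (charf \<mu> r * cnj (charf \<nu> r))))"
      by (simp only: cmod_diff_power2_eq)
    also have "\<dots> = 2 * ennreal (1 - Re (charf \<mu> r * cnj (charf \<nu> r)))"
      by (subst ennreal_mult') simp_all
    finally show ?thesis .
  qed
  then have "(\<integral>\<^sup>+ r. ennreal ((cmod (charf \<mu> r - charf \<nu> r))\<^sup>2) + ennreal (1 - Re (charf \<mu> r * cnj (charf \<mu> r)))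
      + ennreal (1 - Re (charf \<nu> r * cnj (charf \<nu> r))) \<partial>\<rho>)
    = 2 * (\<integral>\<^sup>+ r. ennreal (1 - Re (charf \<mu> r * cnj (charf \<nu> r))) \<partial>\<rho>)"
    by (simp add: nn_integral_cmult)
  then show ?thesis
    by (simp add: d_rho_power2 nn_integral_add)
qed

lemma d_rho_power2_le:
  fixes \<mu> \<nu> \<rho> :: "'a::euclidean_space measure"
  assumes "prob_space \<mu>" "sets \<mu> = sets borel" "prob_space \<nu>" "sets \<nu> = sets borel"
    and "sets \<rho> = sets borel"
  shows "(d_rho \<rho> \<mu> \<nu>)\<^sup>2
    \<le> 4 * ((\<integral>\<^sup>+ r. ennreal (1 - Re (charf \<mu> r)) \<partial>\<rho>) + (\<integral>\<^sup>+ r. ennreal (1 - Re (charf \<nu> r)) \<partial>\<rho>))"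
proof -
  have [measurable]: "charf \<mu> \<in> borel_measurable \<rho>" "charf \<nu> \<in> borel_measurable \<rho>"
    using assms by (simp_all add: measurable_cong_sets[OF assms(5) refl] borel_measurable_charf)
  have "(d_rho \<rho> \<mu> \<nu>)\<^sup>2
      \<le> (\<integral>\<^sup>+ r. 4 * (ennreal (1 - Re (charf \<mu> r)) + ennreal (1 - Re (charf \<nu> r))) \<partial>\<rho>)"
    unfolding d_rho_power2
  proof (rule nn_integral_mono)
    fix r
    have norm_le: "cmod (charf \<mu> r) \<le> 1" "cmod (charf \<nu> r) \<le> 1"
      using assms(1,3) by (simp_all add: norm_charf_le_1)
    then have "ennreal ((cmod (charf \<mu> r - charf \<nu> r))\<^sup>2)
        \<le> ennreal (4 * ((1 - Re (charf \<mu> r)) + (1 - Re (charf \<nu> r))))"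
      by (intro ennreal_leI cmod_diff_power2_le)
    also have "\<dots> = 4 * (ennreal (1 - Re (charf \<mu> r)) + ennreal (1 - Re (charf \<nu> r)))"
      using norm_le complex_Re_le_cmod[of "charf \<mu> r"] complex_Re_le_cmod[of "charf \<nu> r"]
      by (intro ennreal_numeral_mult_add) linarith+
    finally show "ennreal ((cmod (charf \<mu> r - charf \<nu> r))\<^sup>2)
        \<le> 4 * (ennreal (1 - Re (charf \<mu> r)) + ennreal (1 - Re (charf \<nu> r)))" .
  qed
  also have "\<dots> = 4 * ((\<integral>\<^sup>+ r. ennreal (1 - Re (charf \<mu> r)) \<partial>\<rho>) + (\<integral>\<^sup>+ r. ennreal (1 - Re (charf \<nu> r)) \<partial>\<rho>))"
    by (simp add: nn_integral_cmult nn_integral_add)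
  finally show ?thesis .
qed

lemma nn_integral_Theta_distr:
  fixes X :: "'b \<Rightarrow> 'a::euclidean_space"
  assumes "prob_space M" "sym_levy_measure \<rho>" "X \<in> borel_measurable M"
  shows "(\<integral>\<^sup>+ \<omega>. Theta \<rho> (X \<omega>) \<partial>M) = (\<integral>\<^sup>+ r. ennreal (1 - Re (charf (law M X) r)) \<partial>\<rho>)"
proof -
  have "(\<integral>\<^sup>+ \<omega>. Theta \<rho> (X \<omega>) \<partial>M) = (\<integral>\<^sup>+ u. Theta \<rho> u \<partial>law M X)"
    using assms by (simp add: nn_integral_distr borel_measurable_Theta)
  also have "\<dots> = (\<integral>\<^sup>+ r. ennreal (1 - Re (charf (law M X) r)) \<partial>\<rho>)"
    using assms by (intro nn_integral_Theta_eq_charf) (auto intro: prob_space.prob_space_distr)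
  finally show ?thesis .
qed

lemma nn_integral_Theta_diff_le:
  fixes X Y :: "'b \<Rightarrow> 'a::euclidean_space"
  assumes "sym_levy_measure \<rho>" "X \<in> borel_measurable M" "Y \<in> borel_measurable M"
  shows "(\<integral>\<^sup>+ \<omega>. Theta \<rho> (X \<omega> - Y \<omega>) \<partial>M) \<le> 2 * ((\<integral>\<^sup>+ \<omega>. Theta \<rho> (X \<omega>) \<partial>M) + (\<integral>\<^sup>+ \<omega>. Theta \<rho> (Y \<omega>) \<partial>M))"
proof -
  have [measurable]: "Theta \<rho> \<in> borel_measurable borel"
    using assms(1) by (rule borel_measurable_Theta)
  have "(\<integral>\<^sup>+ \<omega>. Theta \<rho> (X \<omega> - Y \<omega>) \<partial>M) \<le> (\<integral>\<^sup>+ \<omega>. 2 * (Theta \<rho> (X \<omega>) + Theta \<rho> (Y \<omega>)) \<partial>M)"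
    using sets_sym_levy_measure[OF assms(1)] by (intro nn_integral_mono Theta_diff_le)
  also have "\<dots> = 2 * ((\<integral>\<^sup>+ \<omega>. Theta \<rho> (X \<omega>) \<partial>M) + (\<integral>\<^sup>+ \<omega>. Theta \<rho> (Y \<omega>) \<partial>M))"
    using assms(2,3) by (simp add: nn_integral_cmult nn_integral_add)
  finally show ?thesis .
qed

lemma charf_distr_diff_indep:
  fixes X Y :: "'b \<Rightarrow> 'a::euclidean_space"
  assumes "prob_space M" and indep: "prob_space.indep_var M borel X borel Y"
  shows "charf (law M (\<lambda>\<omega>. X \<omega> - Y \<omega>)) r = charf (law M X) r * cnj (charf (law M Y) r)"
proof -
  interpret prob_space M by fact
  have [measurable]: "X \<in> borel_measurable M" "Y \<in> borel_measurable M"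
    using indep_var_rv1[OF indep] indep_var_rv2[OF indep] by auto
  have "indep_var borel (\<lambda>\<omega>. cis (r \<bullet> X \<omega>)) borel (\<lambda>\<omega>. cis (- (r \<bullet> Y \<omega>)))"
    using indep_var_compose[unfolded comp_def, OF indep, of "\<lambda>x. cis (r \<bullet> x)" borel "\<lambda>x. cis (- (r \<bullet> x))" borel]
    by simp
  moreover have "integrable M (\<lambda>\<omega>. cis (r \<bullet> X \<omega>))" "integrable M (\<lambda>\<omega>. cis (- (r \<bullet> Y \<omega>)))"
    by (auto intro: integrable_const_bound[where B=1])
  ultimately have "(\<integral>\<omega>. cis (r \<bullet> X \<omega>) * cis (- (r \<bullet> Y \<omega>)) \<partial>M)
      = (\<integral>\<omega>. cis (r \<bullet> X \<omega>) \<partial>M) * (\<integral>\<omega>. cis (- (r \<bullet> Y \<omega>)) \<partial>M)"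
    by (rule indep_var_lebesgue_integral)
  moreover have "(\<integral>\<omega>. cis (- (r \<bullet> Y \<omega>)) \<partial>M) = cnj (\<integral>\<omega>. cis (r \<bullet> Y \<omega>) \<partial>M)"
    by (simp add: cis_cnj[symmetric])
  ultimately show ?thesis
    by (simp add: charf_distr inner_diff_right cis_mult)
qed

lemma nn_integral_Theta_diff_indep:
  fixes X Y :: "'b \<Rightarrow> 'a::euclidean_space"
  assumes "prob_space M" "sym_levy_measure \<rho>" and indep: "prob_space.indep_var M borel X borel Y"
  shows "(\<integral>\<^sup>+ \<omega>. Theta \<rho> (X \<omega> - Y \<omega>) \<partial>M)
    = (\<integral>\<^sup>+ r. ennreal (1 - Re (charf (law M X) r * cnj (charf (law M Y) r))) \<partial>\<rho>)"
proof -
  have [measurable]: "X \<in> borel_measurable M" "Y \<in> borel_measurable M"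
    using prob_space.indep_var_rv1[OF assms(1) indep] prob_space.indep_var_rv2[OF assms(1) indep] by auto
  show ?thesis
    using assms by (simp add: nn_integral_Theta_distr charf_distr_diff_indep)
qed

lemma indep_copy_marginals:
  fixes U V U' V' :: "'b \<Rightarrow> 'a::euclidean_space"
  assumes "prob_space M"
    and [measurable]: "U \<in> borel_measurable M" "V \<in> borel_measurable M"
      "U' \<in> borel_measurable M" "V' \<in> borel_measurable M"
    and law_eq: "distr M (borel \<Otimes>\<^sub>M borel) (\<lambda>\<omega>. (U' \<omega>, V' \<omega>)) = distr M (borel \<Otimes>\<^sub>M borel) (\<lambda>\<omega>. (U \<omega>, V \<omega>))"
    and indep: "prob_space.indep_var M (borel \<Otimes>\<^sub>M borel) (\<lambda>\<omega>. (U \<omega>, V \<omega>)) (borel \<Otimes>\<^sub>M borel) (\<lambda>\<omega>. (U' \<omega>, V' \<omega>))"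
  shows "law M U' = law M U" "law M V' = law M V"
    and "prob_space.indep_var M borel U borel U'" "prob_space.indep_var M borel V borel V'"
      "prob_space.indep_var M borel U borel V'"
proof -
  interpret prob_space M by fact
  have marginals: "law M X = distr (distr M (borel \<Otimes>\<^sub>M borel) (\<lambda>\<omega>. (X \<omega>, Y \<omega>))) borel fst"
      "law M Y = distr (distr M (borel \<Otimes>\<^sub>M borel) (\<lambda>\<omega>. (X \<omega>, Y \<omega>))) borel snd"
    if [measurable]: "X \<in> borel_measurable M" "Y \<in> borel_measurable M" for X Y :: "'b \<Rightarrow> 'a"
    by (subst distr_distr; simp add: comp_def)+
  show "law M U' = law M U" "law M V' = law M V"
    using marginals[of U V] marginals[of U' V'] law_eq by simp_all
  show "indep_var borel U borel U'" "indep_var borel V borel V'" "indep_var borel U borel V'"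
    using indep_var_compose[unfolded comp_def, OF indep, of fst borel fst borel]
      indep_var_compose[unfolded comp_def, OF indep, of snd borel snd borel]
      indep_var_compose[unfolded comp_def, OF indep, of fst borel snd borel]
    by simp_all
qed

lemma d_rho_power2_indep_copy:
  fixes U V U' V' :: "'b \<Rightarrow> 'a::euclidean_space"
  assumes "prob_space M" "sym_levy_measure \<rho>"
    and "U \<in> borel_measurable M" "V \<in> borel_measurable M"
      "U' \<in> borel_measurable M" "V' \<in> borel_measurable M"
    and "distr M (borel \<Otimes>\<^sub>M borel) (\<lambda>\<omega>. (U' \<omega>, V' \<omega>)) = distr M (borel \<Otimes>\<^sub>M borel) (\<lambda>\<omega>. (U \<omega>, V \<omega>))"
    and "prob_space.indep_var M (borel \<Otimes>\<^sub>M borel) (\<lambda>\<omega>. (U \<omega>, V \<omega>)) (borel \<Otimes>\<^sub>M borel) (\<lambda>\<omega>. (U' \<omega>, V' \<omega>))"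
  shows "(d_rho \<rho> (law M U) (law M V))\<^sup>2 + (\<integral>\<^sup>+ \<omega>. Theta \<rho> (U \<omega> - U' \<omega>) \<partial>M)
      + (\<integral>\<^sup>+ \<omega>. Theta \<rho> (V \<omega> - V' \<omega>) \<partial>M)
    = 2 * (\<integral>\<^sup>+ \<omega>. Theta \<rho> (U \<omega> - V' \<omega>) \<partial>M)"
proof -
  note copy = indep_copy_marginals[OF assms(1,3-8)]
  have "prob_space (law M X)" if "X \<in> borel_measurable M" for X :: "'b \<Rightarrow> 'a"
    using assms(1) that by (rule prob_space.prob_space_distr)
  then show ?thesis
    using assms(1-4) d_rho_power2_add_eq[of "law M U" "law M V" \<rho>]
    by (simp add: nn_integral_Theta_diff_indep copy sets_sym_levy_measure)
qed

lemma nn_integral_Theta_indep_copy_le: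
  fixes U V U' V' :: "'b \<Rightarrow> 'a::euclidean_space"
  assumes "prob_space M" "sym_levy_measure \<rho>"
    and "U \<in> borel_measurable M" "V \<in> borel_measurable M"
      "U' \<in> borel_measurable M" "V' \<in> borel_measurable M"
    and "distr M (borel \<Otimes>\<^sub>M borel) (\<lambda>\<omega>. (U' \<omega>, V' \<omega>)) = distr M (borel \<Otimes>\<^sub>M borel) (\<lambda>\<omega>. (U \<omega>, V \<omega>))"
    and "prob_space.indep_var M (borel \<Otimes>\<^sub>M borel) (\<lambda>\<omega>. (U \<omega>, V \<omega>)) (borel \<Otimes>\<^sub>M borel) (\<lambda>\<omega>. (U' \<omega>, V' \<omega>))"
  shows "(\<integral>\<^sup>+ \<omega>. Theta \<rho> (U \<omega> - U' \<omega>) \<partial>M) + (\<integral>\<^sup>+ \<omega>. Theta \<rho> (V \<omega> - V' \<omega>) \<partial>M)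
    \<le> 2 * (\<integral>\<^sup>+ \<omega>. Theta \<rho> (U \<omega> - V' \<omega>) \<partial>M)"
proof -
  let ?A = "\<integral>\<^sup>+ \<omega>. Theta \<rho> (U \<omega> - U' \<omega>) \<partial>M" and ?B = "\<integral>\<^sup>+ \<omega>. Theta \<rho> (V \<omega> - V' \<omega>) \<partial>M"
  have "?A + ?B \<le> (d_rho \<rho> (law M U) (law M V))\<^sup>2 + ?A + ?B"
    by (simp add: add.assoc add_increasing)
  then show ?thesis
    unfolding d_rho_power2_indep_copy[OF assms] .
qed

lemma nn_integral_Theta_diff_same_law_le:
  fixes U U' :: "'b \<Rightarrow> 'a::euclidean_space"
  assumes "prob_space M" "sym_levy_measure \<rho>"
    and "U \<in> borel_measurable M" "U' \<in> borel_measurable M" "law M U' = law M U"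
  shows "(\<integral>\<^sup>+ \<omega>. Theta \<rho> (U \<omega> - U' \<omega>) \<partial>M) \<le> 4 * (\<integral>\<^sup>+ \<omega>. Theta \<rho> (U \<omega>) \<partial>M)"
proof -
  have "(\<integral>\<^sup>+ \<omega>. Theta \<rho> (U' \<omega>) \<partial>M) = (\<integral>\<^sup>+ \<omega>. Theta \<rho> (U \<omega>) \<partial>M)"
    using assms by (simp add: nn_integral_Theta_distr)
  then have "2 * ((\<integral>\<^sup>+ \<omega>. Theta \<rho> (U \<omega>) \<partial>M) + (\<integral>\<^sup>+ \<omega>. Theta \<rho> (U' \<omega>) \<partial>M))
      = 4 * (\<integral>\<^sup>+ \<omega>. Theta \<rho> (U \<omega>) \<partial>M)"
    by (simp add: mult_2[symmetric] mult.assoc)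
  then show ?thesis
    using nn_integral_Theta_diff_le[OF assms(2-4)] by simp
qed

lemma d_rho_power2_law_le:
  fixes U V :: "'b \<Rightarrow> 'a::euclidean_space"
  assumes "prob_space M" "sym_levy_measure \<rho>" "U \<in> borel_measurable M" "V \<in> borel_measurable M"
  shows "(d_rho \<rho> (law M U) (law M V))\<^sup>2
    \<le> 4 * ((\<integral>\<^sup>+ \<omega>. Theta \<rho> (U \<omega>) \<partial>M) + (\<integral>\<^sup>+ \<omega>. Theta \<rho> (V \<omega>) \<partial>M))"
  using assms d_rho_power2_le[of "law M U" "law M V" \<rho>]
  by (simp add: nn_integral_Theta_distr prob_space.prob_space_distr sets_sym_levy_measure)

lemma d_rho_power2_indep_copy_finite:
  fixes U V U' V' :: "'b \<Rightarrow> 'a::euclidean_space"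
  assumes "prob_space M" "sym_levy_measure \<rho>"
    and "U \<in> borel_measurable M" "V \<in> borel_measurable M"
      "U' \<in> borel_measurable M" "V' \<in> borel_measurable M"
    and "distr M (borel \<Otimes>\<^sub>M borel) (\<lambda>\<omega>. (U' \<omega>, V' \<omega>)) = distr M (borel \<Otimes>\<^sub>M borel) (\<lambda>\<omega>. (U \<omega>, V \<omega>))"
    and "prob_space.indep_var M (borel \<Otimes>\<^sub>M borel) (\<lambda>\<omega>. (U \<omega>, V \<omega>)) (borel \<Otimes>\<^sub>M borel) (\<lambda>\<omega>. (U' \<omega>, V' \<omega>))"
    and finite: "(\<integral>\<^sup>+ \<omega>. Theta \<rho> (U \<omega>) \<partial>M) + (\<integral>\<^sup>+ \<omega>. Theta \<rho> (V \<omega>) \<partial>M) < \<infinity>"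
  shows "(d_rho \<rho> (law M U) (law M V))\<^sup>2 < \<infinity>"
    and "(\<integral>\<^sup>+ \<omega>. Theta \<rho> (U \<omega> - V' \<omega>) \<partial>M) < \<infinity>"
    and "(\<integral>\<^sup>+ \<omega>. Theta \<rho> (U \<omega> - U' \<omega>) \<partial>M) < \<infinity>"
    and "(\<integral>\<^sup>+ \<omega>. Theta \<rho> (V \<omega> - V' \<omega>) \<partial>M) < \<infinity>"
    and "enn2real ((d_rho \<rho> (law M U) (law M V))\<^sup>2)
      = 2 * enn2real (\<integral>\<^sup>+ \<omega>. Theta \<rho> (U \<omega> - V' \<omega>) \<partial>M)
        - enn2real (\<integral>\<^sup>+ \<omega>. Theta \<rho> (U \<omega> - U' \<omega>) \<partial>M)
        - enn2real (\<integral>\<^sup>+ \<omega>. Theta \<rho> (V \<omega> - V' \<omega>) \<partial>M)"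
proof -
  have "(\<integral>\<^sup>+ \<omega>. Theta \<rho> (V' \<omega>) \<partial>M) = (\<integral>\<^sup>+ \<omega>. Theta \<rho> (V \<omega>) \<partial>M)"
    using assms indep_copy_marginals(2)[OF assms(1,3-8)] by (simp add: nn_integral_Theta_distr)
  then have "(\<integral>\<^sup>+ \<omega>. Theta \<rho> (U \<omega> - V' \<omega>) \<partial>M)
      \<le> 2 * ((\<integral>\<^sup>+ \<omega>. Theta \<rho> (U \<omega>) \<partial>M) + (\<integral>\<^sup>+ \<omega>. Theta \<rho> (V \<omega>) \<partial>M))"
    using nn_integral_Theta_diff_le[OF assms(2,3,6)] by simp
  also have "\<dots> < \<infinity>"
    using finite by (simp add: ennreal_mult_less_top)
  finally show "(\<integral>\<^sup>+ \<omega>. Theta \<rho> (U \<omega> - V' \<omega>) \<partial>M) < \<infinity>" .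
  note enn2real_eq_of_add_eq_twice[OF d_rho_power2_indep_copy[OF assms(1-8)] this]
  then show "(d_rho \<rho> (law M U) (law M V))\<^sup>2 < \<infinity>"
    and "(\<integral>\<^sup>+ \<omega>. Theta \<rho> (U \<omega> - U' \<omega>) \<partial>M) < \<infinity>"
    and "(\<integral>\<^sup>+ \<omega>. Theta \<rho> (V \<omega> - V' \<omega>) \<partial>M) < \<infinity>"
    and "enn2real ((d_rho \<rho> (law M U) (law M V))\<^sup>2)
      = 2 * enn2real (\<integral>\<^sup>+ \<omega>. Theta \<rho> (U \<omega> - V' \<omega>) \<partial>M)
        - enn2real (\<integral>\<^sup>+ \<omega>. Theta \<rho> (U \<omega> - U' \<omega>) \<partial>M)
        - enn2real (\<integral>\<^sup>+ \<omega>. Theta \<rho> (V \<omega> - V' \<omega>) \<partial>M)"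
    by simp_all
qed

theorem proposition2p4:
  fixes M :: "'b measure" and \<rho> :: "'a::euclidean_space measure"
    and U V :: "'b \<Rightarrow> 'a"
  assumes "prob_space M"
    and "sym_levy_measure \<rho>" and "full_support \<rho>"
    and U: "U \<in> borel_measurable M" and V: "V \<in> borel_measurable M"
  shows
  \<comment> \<open>(a)\<close>
  "(\<forall>U' V'. U' \<in> borel_measurable M \<and> V' \<in> borel_measurable M \<and>
      distr M (borel \<Otimes>\<^sub>M borel) (\<lambda>\<omega>. (U' \<omega>, V' \<omega>)) = distr M (borel \<Otimes>\<^sub>M borel) (\<lambda>\<omega>. (U \<omega>, V \<omega>)) \<and>
      prob_space.indep_var M (borel \<Otimes>\<^sub>M borel) (\<lambda>\<omega>. (U \<omega>, V \<omega>)) (borel \<Otimes>\<^sub>M borel) (\<lambda>\<omega>. (U' \<omega>, V' \<omega>))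
    \<longrightarrow> (\<integral>\<^sup>+ \<omega>. Theta \<rho> (U \<omega> - U' \<omega>) \<partial>M) + (\<integral>\<^sup>+ \<omega>. Theta \<rho> (V \<omega> - V' \<omega>) \<partial>M)
        \<le> 2 * (\<integral>\<^sup>+ \<omega>. Theta \<rho> (U \<omega> - V' \<omega>) \<partial>M))
  \<and>
  \<comment> \<open>(b)\<close>
  (\<integral>\<^sup>+ \<omega>. Theta \<rho> (U \<omega> - V \<omega>) \<partial>M)
     \<le> 2 * ((\<integral>\<^sup>+ \<omega>. Theta \<rho> (U \<omega>) \<partial>M) + (\<integral>\<^sup>+ \<omega>. Theta \<rho> (V \<omega>) \<partial>M))
  \<and>
  (\<forall>U'. U' \<in> borel_measurable M \<and> distr M borel U' = distr M borel U \<and>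
      prob_space.indep_var M borel U borel U'
    \<longrightarrow> (\<integral>\<^sup>+ \<omega>. Theta \<rho> (U \<omega> - U' \<omega>) \<partial>M) \<le> 4 * (\<integral>\<^sup>+ \<omega>. Theta \<rho> (U \<omega>) \<partial>M))
  \<and>
  \<comment> \<open>(c)\<close>
  (d_rho \<rho> (law M U) (law M V))\<^sup>2
     \<le> 4 * ((\<integral>\<^sup>+ \<omega>. Theta \<rho> (U \<omega>) \<partial>M) + (\<integral>\<^sup>+ \<omega>. Theta \<rho> (V \<omega>) \<partial>M))
  \<and>
  \<comment> \<open>(d)\<close>
  (\<forall>U' V'. U' \<in> borel_measurable M \<and> V' \<in> borel_measurable M \<and>
      distr M (borel \<Otimes>\<^sub>M borel) (\<lambda>\<omega>. (U' \<omega>, V' \<omega>)) = distr M (borel \<Otimes>\<^sub>M borel) (\<lambda>\<omega>. (U \<omega>, V \<omega>)) \<and>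
      prob_space.indep_var M (borel \<Otimes>\<^sub>M borel) (\<lambda>\<omega>. (U \<omega>, V \<omega>)) (borel \<Otimes>\<^sub>M borel) (\<lambda>\<omega>. (U' \<omega>, V' \<omega>)) \<and>
      (\<integral>\<^sup>+ \<omega>. Theta \<rho> (U \<omega>) \<partial>M) + (\<integral>\<^sup>+ \<omega>. Theta \<rho> (V \<omega>) \<partial>M) < \<infinity>
    \<longrightarrow> (d_rho \<rho> (law M U) (law M V))\<^sup>2 < \<infinity>
      \<and> (\<integral>\<^sup>+ \<omega>. Theta \<rho> (U \<omega> - V' \<omega>) \<partial>M) < \<infinity>
      \<and> (\<integral>\<^sup>+ \<omega>. Theta \<rho> (U \<omega> - U' \<omega>) \<partial>M) < \<infinity>
      \<and> (\<integral>\<^sup>+ \<omega>. Theta \<rho> (V \<omega> - V' \<omega>) \<partial>M) < \<infinity>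
      \<and> enn2real ((d_rho \<rho> (law M U) (law M V))\<^sup>2)
          = 2 * enn2real (\<integral>\<^sup>+ \<omega>. Theta \<rho> (U \<omega> - V' \<omega>) \<partial>M)
            - enn2real (\<integral>\<^sup>+ \<omega>. Theta \<rho> (U \<omega> - U' \<omega>) \<partial>M)
            - enn2real (\<integral>\<^sup>+ \<omega>. Theta \<rho> (V \<omega> - V' \<omega>) \<partial>M))"
  using nn_integral_Theta_indep_copy_le[OF assms(1,2) U V]
    nn_integral_Theta_diff_le[OF assms(2) U V]
    nn_integral_Theta_diff_same_law_le[OF assms(1,2) U]
    d_rho_power2_law_le[OF assms(1,2) U V]
    d_rho_power2_indep_copy_finite[OF assms(1,2) U V]
  by (intro conjI allI impI; (elim conjE)?; blast)

end
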